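(* For all $a,d,x\in\mathbb C$ and $n\in\mathbb C$ with $d-n\in\mathbb N$, $$f(a,d,n)_x=f(a-1,d,n)_x+f(a-1,d,n+1)_{x-1}$$ and $$f(a,d,n)_x=f(a-1,d,n)_{x+1}+f(a-1,d,n+1)_{x+1}.$$
   Context: For $z\in\mathbb C$ and $k\in\mathbb N$, $\binom{z}{k}=\frac{z(z-1)\cdots(z-k+1)}{k!}$. For $a,d,x,n\in\mathbb C$ with $d-n\in\mathbb N\cup\{-1\}$, $f(a,d,n)_x=\sum_{k=0}^{d-n}\binom{a+d+x-k}{k}\binom{d+k-x}{d-n-k}$, the empty sum (when $d-n=-1$) being $0$. *)

theory Defs
  imports Complex_Main
begin

definition fpoly :: "complex \<Rightarrow> complex \<Rightarrow> complex \<Rightarrow> complex \<Rightarrow> complex" where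
  "fpoly a d n x =
     (if \<exists>m::nat. d - n = of_nat m then
        (let m = (THE m::nat. d - n = of_nat m) in
          \<Sum>k\<le>m. ((a + d + x - of_nat k) gchoose k) * ((d + of_nat k - x) gchoose (m - k)))
      else 0)"

end

theory Submission
  imports Defs
begin

text \<open>Writing \<open>m = d - n\<close>, \<open>u = a + d + x\<close> and \<open>v = d - x\<close>, the value \<open>f(a,d,n)\<^sub>x\<close> is a
  convolution \<open>\<Sum>k\<le>m. (u - k choose k) (v + k choose m - k)\<close>. Lowering \<open>a\<close> by one lowers \<open>u\<close>;
  the first identity is Pascal's rule applied to the left factor of every term with \<open>k > 0\<close>,
  the second is Pascal's rule applied to the right factor of every term with \<open>k < m\<close>.
  When \<open>m = 0\<close> the value with \<open>n + 1\<close> is the empty sum and both identities say \<open>1 = 1 + 0\<close>.\<close>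

definition gbinomial_convolution :: "'a::field_char_0 \<Rightarrow> 'a \<Rightarrow> nat \<Rightarrow> 'a" where
  "gbinomial_convolution u v m =
     (\<Sum>k\<le>m. ((u - of_nat k) gchoose k) * ((v + of_nat k) gchoose (m - k)))"

lemma gbinomial_convolution_0 [simp]: "gbinomial_convolution u v 0 = 1"
  by (simp add: gbinomial_convolution_def)

lemma gbinomial_convolution_Suc_lower:
  "gbinomial_convolution u v (Suc m) =
     gbinomial_convolution (u - 1) v (Suc m) + gbinomial_convolution (u - 2) (v + 1) m"
proof -
  have pascal: "(u - of_nat (Suc i)) gchoose Suc i =
      ((u - 1 - of_nat (Suc i)) gchoose Suc i) + ((u - 2 - of_nat i) gchoose i)" for i
    using gbinomial_addition_formula[of "u - of_nat (Suc i)" i]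
    by (simp add: algebra_simps)
  have "gbinomial_convolution u v (Suc m) = (v gchoose Suc m) +
      (\<Sum>i\<le>m. ((u - of_nat (Suc i)) gchoose Suc i) * ((v + of_nat (Suc i)) gchoose (m - i)))"
    unfolding gbinomial_convolution_def by (subst sum.atMost_Suc_shift) simp
  also have "\<dots> = ((v gchoose Suc m) +
      (\<Sum>i\<le>m. ((u - 1 - of_nat (Suc i)) gchoose Suc i) * ((v + of_nat (Suc i)) gchoose (m - i)))) +
      (\<Sum>i\<le>m. ((u - 2 - of_nat i) gchoose i) * ((v + of_nat (Suc i)) gchoose (m - i)))"
    by (simp only: pascal distrib_right sum.distrib add.assoc)
  also have "\<dots> = gbinomial_convolution (u - 1) v (Suc m) + gbinomial_convolution (u - 2) (v + 1) m"
    unfolding gbinomial_convolution_def by (subst sum.atMost_Suc_shift) (simp add: ac_simps)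
  finally show ?thesis .
qed

lemma gbinomial_convolution_Suc_upper:
  "gbinomial_convolution u v (Suc m) =
     gbinomial_convolution u (v - 1) (Suc m) + gbinomial_convolution u (v - 1) m"
proof -
  have pascal: "(v + of_nat k) gchoose (Suc m - k) =
      ((v - 1 + of_nat k) gchoose (Suc m - k)) + ((v - 1 + of_nat k) gchoose (m - k))"
    if "k \<le> m" for k
    using gbinomial_addition_formula[of "v + of_nat k" "m - k"] that
    by (simp add: Suc_diff_le algebra_simps)
  have split: "(\<Sum>k\<le>m. ((u - of_nat k) gchoose k) * ((v + of_nat k) gchoose (Suc m - k))) =
      (\<Sum>k\<le>m. ((u - of_nat k) gchoose k) * ((v - 1 + of_nat k) gchoose (Suc m - k))) +
      (\<Sum>k\<le>m. ((u - of_nat k) gchoose k) * ((v - 1 + of_nat k) gchoose (m - k)))"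
    unfolding sum.distrib[symmetric] by (rule sum.cong) (simp_all add: pascal distrib_left)
  show ?thesis
    unfolding gbinomial_convolution_def sum.atMost_Suc split by simp
qed

lemma fpoly_eq_gbinomial_convolution:
  assumes "d - n = of_nat m"
  shows "fpoly a d n x = gbinomial_convolution (a + d + x) (d - x) m"
proof -
  have "(THE m::nat. d - n = of_nat m) = m"
    using assms by (intro the_equality) auto
  with assms show ?thesis
    unfolding fpoly_def gbinomial_convolution_def by (auto simp: Let_def algebra_simps)
qed

lemma fpoly_eq_0:
  assumes "d - n = -1"
  shows "fpoly a d n x = 0"
proof -
  have "d - n \<noteq> of_nat m" for m :: nat
  proof
    assume "d - n = of_nat m"
    with assms have "Re (of_nat m) = -1" by simp
    then show False by simp
  qed
  then show ?thesis unfolding fpoly_def by auto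
qed

theorem lemma4p3:
  fixes a d n x :: complex
  assumes "d - n \<in> \<nat>"
  shows "fpoly a d n x = fpoly (a - 1) d n x + fpoly (a - 1) d (n + 1) (x - 1) \<and>
         fpoly a d n x = fpoly (a - 1) d n (x + 1) + fpoly (a - 1) d (n + 1) (x + 1)"
proof -
  obtain m :: nat where m: "d - n = of_nat m"
    using assms by (auto elim: Nats_cases)
  have same_n: "fpoly a' d n x' = gbinomial_convolution (a' + d + x') (d - x') m" for a' x'
    using fpoly_eq_gbinomial_convolution[OF m] .
  show ?thesis
  proof (cases m)
    case 0
    then have "d - (n + 1) = -1"
      using m by (simp add: algebra_simps)
    then have "fpoly a' d (n + 1) x' = 0" for a' x'
      by (rule fpoly_eq_0)
    then show ?thesis
      by (simp add: same_n 0)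
  next
    case (Suc k)
    then have "d - (n + 1) = of_nat k"
      using m by (simp add: algebra_simps)
    then have next_n: "fpoly a' d (n + 1) x' = gbinomial_convolution (a' + d + x') (d - x') k"
      for a' x' using fpoly_eq_gbinomial_convolution by blast
    show ?thesis
      unfolding same_n next_n Suc
      using gbinomial_convolution_Suc_lower[of "a + d + x" "d - x" k]
        gbinomial_convolution_Suc_upper[of "a + d + x" "d - x" k]
      by (simp add: algebra_simps)
  qed
qed

end
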